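(* Let $w=a_0a_1\cdots a_k$ and $w'=b_0b_1\cdots b_k$ be admissible $(k+1)$-words, let $p$ be the fundamental period of $w$, and suppose there is a non-negative integer $i_0$ which is the smallest non-negative integer with $b_0\cdots b_{k-i_0}=a_{i_0}\cdots a_k$. Let $i$ be a positive integer with $i\le k$ and $b_0\cdots b_{k-i}=a_i\cdots a_k$. Then either $p$ divides $i-i_0$ or $i\ge k+2-p$.
   Context: Let $\mathcal{A}$ be a finite alphabet and $T=(T_{x,y})$ a square matrix indexed by $\mathcal{A}$ with entries in $\{0,1\}$. An admissible $m$-word is a string $u_1\cdots u_m$ with $T_{u_{i+1},u_i}=1$ for all $i$. For an admissible $k$-word $u=u_1\cdots u_k$, $h(u)$ is the least non-negative integer $h$ such that $u$ is the only admissible $k$-word beginning with $u_1\cdots u_{h+1}$. For an admissible $(k+1)$-word $w=a_0a_1\cdots a_k$, let $d=h(a_1\cdots a_k)$; the fundamental period of $w$ is the smallest integer $p$ with $1\le p\le d$ and $a_0a_1\cdots a_{k-p}=a_p\cdots a_k$, and $p=k+1$ if no such integer exists. *)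

theory Defs
  imports Main
begin

text \<open>Words are lists; u = u_1 ... u_m is the list [u_1,...,u_m] (0-based indices in the list).
  The transition matrix T is a boolean function on a finite alphabet: T x y means T_{x,y} = 1.\<close>

definition admissible :: "('a \<Rightarrow> 'a \<Rightarrow> bool) \<Rightarrow> 'a list \<Rightarrow> bool" where
  "admissible T u \<longleftrightarrow> (\<forall>i. Suc i < length u \<longrightarrow> T (u ! Suc i) (u ! i))"

definition hval :: "('a \<Rightarrow> 'a \<Rightarrow> bool) \<Rightarrow> 'a list \<Rightarrow> nat" where
  "hval T u = (LEAST h. \<forall>v. admissible T v \<and> length v = length u \<and> take (h + 1) v = take (h + 1) u
                              \<longrightarrow> v = u)"

definition fund_period :: "('a \<Rightarrow> 'a \<Rightarrow> bool) \<Rightarrow> 'a list \<Rightarrow> nat" where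
  "fund_period T w =
    (let k = length w - 1; d = hval T (tl w) in
      if \<exists>p. 1 \<le> p \<and> p \<le> d \<and> take (k + 1 - p) w = drop p w
      then (LEAST p. 1 \<le> p \<and> p \<le> d \<and> take (k + 1 - p) w = drop p w)
      else k + 1)"

end

theory Submission
  imports Defs
begin

text \<open>Let p \<le> k be the fundamental period of w and suppose i + p \<le> k + 1. Since both
  a_{i_0}... and a_i... are prefixes of w', the word w agrees with its shift by i - i_0 on a
  window of length p. As w is p-periodic, this window propagates to all of w, so
  (i - i_0) mod p < p is a period too, and minimality of p forces it to be 0.\<close>

definition is_period :: "'a list \<Rightarrow> nat \<Rightarrow> bool" where
  "is_period w p \<longleftrightarrow> (\<forall>m. m + p < length w \<longrightarrow> w ! m = w ! (m + p))"

lemma take_eq_drop_iff_is_period: "take (length w - p) w = drop p w \<longleftrightarrow> is_period w p"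
  unfolding is_period_def by (auto simp: list_eq_iff_nth_eq add.commute)

lemma is_period_nth_add_mult:
  assumes "is_period w p" "a + p * c < length w"
  shows "w ! (a + p * c) = w ! a"
  using assms(2)
proof (induction c)
  case (Suc c)
  then have "w ! (a + p * c) = w ! (a + p * c + p)"
    using assms(1) unfolding is_period_def by simp
  then have "w ! (a + p * Suc c) = w ! (a + p * c)"
    by (simp add: algebra_simps)
  with Suc show ?case by simp
qed simp

lemma is_period_nth_mod_eq:
  assumes "is_period w p" "a < length w" "b < length w" "a mod p = b mod p"
  shows "w ! a = w ! b"
proof -
  have "w ! y = w ! x" if "x mod p = y mod p" "x \<le> y" "y < length w" for x y
    using that by (elim mod_eq_nat2E) (use is_period_nth_add_mult[OF assms(1)] in auto)
  with assms(2-4) show ?thesis by (metis nat_le_linear)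
qed

lemma exists_less_mod_eq:
  assumes "0 < (p::nat)"
  obtains j where "j < p" "(s + j) mod p = m mod p"
proof
  let ?j = "(m + (p - s mod p)) mod p"
  show "?j < p" using assms by simp
  have "(s + ?j) mod p = (s mod p + (m + (p - s mod p))) mod p"
    by (metis mod_add_left_eq mod_add_right_eq)
  also have "\<dots> = (m + p) mod p"
    using mod_less_divisor[OF assms, of s] by (simp add: algebra_simps)
  finally show "(s + ?j) mod p = m mod p" by simp
qed

lemma is_period_shift_mod:
  assumes per: "is_period w p" and "0 < p" "s \<le> t" "t + p \<le> length w"
    and window: "\<And>j. j < p \<Longrightarrow> w ! (s + j) = w ! (t + j)"
  shows "is_period w ((t - s) mod p)"
  unfolding is_period_def
proof (intro allI impI)
  fix m
  let ?r = "(t - s) mod p"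
  assume m: "m + ?r < length w"
  obtain j where j: "j < p" "(s + j) mod p = m mod p"
    using exists_less_mod_eq[OF \<open>0 < p\<close>] .
  have "(t + j) mod p = (s + j + (t - s)) mod p"
    using \<open>s \<le> t\<close> by (simp add: algebra_simps)
  also have "\<dots> = ((s + j) mod p + ?r) mod p"
    by (rule mod_add_eq[symmetric])
  also have "\<dots> = (m + ?r) mod p"
    unfolding j(2) by (rule mod_add_left_eq)
  finally have residue: "(t + j) mod p = (m + ?r) mod p" .
  have "w ! m = w ! (s + j)"
    by (rule is_period_nth_mod_eq[OF per]) (use j assms(3,4) m in linarith)+
  also have "\<dots> = w ! (t + j)" using window j(1) .
  also have "\<dots> = w ! (m + ?r)"
    by (rule is_period_nth_mod_eq[OF per]) (use j(1) assms(4) m residue in linarith)+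
  finally show "w ! m = w ! (m + ?r)" .
qed

lemma nth_eq_of_drop_prefixes:
  assumes "length w' = length w"
    and "take (length w - a) w' = drop a w" "take (length w - b) w' = drop b w"
    and "a \<le> b" "b + j < length w"
  shows "w ! (a + j) = w ! (b + j)"
proof -
  have "w ! (a + j) = w' ! j"
    using arg_cong[OF assms(2), of "\<lambda>u. u ! j"] assms(1,4,5) by simp
  also have "\<dots> = w ! (b + j)"
    using arg_cong[OF assms(3), of "\<lambda>u. u ! j"] assms(1,5) by simp
  finally show ?thesis .
qed

lemma fund_period_cases:
  assumes "w \<noteq> []"
  obtains "fund_period T w = length w"
  | "0 < fund_period T w" "is_period w (fund_period T w)"
    "\<And>r. 0 < r \<Longrightarrow> r < fund_period T w \<Longrightarrow> \<not> is_period w r"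
proof -
  define Q where "Q p \<longleftrightarrow> 1 \<le> p \<and> p \<le> hval T (tl w) \<and> is_period w p" for p
  have fp: "fund_period T w = (if \<exists>p. Q p then (LEAST p. Q p) else length w)"
  proof -
    have "length w - 1 + 1 = length w" using assms by simp
    then show ?thesis
      unfolding fund_period_def Let_def Q_def take_eq_drop_iff_is_period[symmetric] by auto
  qed
  show thesis
  proof (cases "\<exists>p. Q p")
    case True
    then have "Q (LEAST p. Q p)" by (rule LeastI_ex)
    moreover have "\<not> is_period w r" if "0 < r" "r < (LEAST p. Q p)" for r
      using not_less_Least[OF that(2)] that calculation unfolding Q_def by auto
    ultimately show thesis using that(2) fp True unfolding Q_def by auto
  qed (use that(1) fp in auto)
qed

theorem lemma4p1:
  fixes T :: "'a::finite \<Rightarrow> 'a \<Rightarrow> bool"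
    and w w' :: "'a list" and k i i0 :: nat
  assumes "admissible T w" and "admissible T w'"
    and "length w = k + 1" and "length w' = k + 1"
    and "take (k + 1 - i0) w' = drop i0 w"
    and "\<forall>j<i0. take (k + 1 - j) w' \<noteq> drop j w"
    and "0 < i" and "i \<le> k"
    and "take (k + 1 - i) w' = drop i w"
  shows "int (fund_period T w) dvd (int i - int i0) \<or> i \<ge> k + 2 - fund_period T w"
proof -
  let ?p = "fund_period T w"
  have "i0 \<le> i" using assms(6,9) by (meson not_le)
  have "w \<noteq> []" using assms(3) by auto
  then show ?thesis
  proof (cases rule: fund_period_cases[where T = T])
    case 2
    show ?thesis
    proof (rule disjCI)
      assume "\<not> k + 2 - ?p \<le> i"
      then have "i + ?p \<le> length w" using assms(3) by simp
      moreover have "w ! (i0 + j) = w ! (i + j)" if "j < ?p" for j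
        using that \<open>i + ?p \<le> length w\<close> \<open>i0 \<le> i\<close> assms(3-5,9)
        by (intro nth_eq_of_drop_prefixes[of w' w]) auto
      ultimately have "is_period w ((i - i0) mod ?p)"
        using 2(1,2) \<open>i0 \<le> i\<close> by (intro is_period_shift_mod) auto
      then have "?p dvd i - i0"
        using 2(1,3) by (meson mod_less_divisor mod_0_imp_dvd neq0_conv)
      then show "int ?p dvd int i - int i0"
        using \<open>i0 \<le> i\<close> by (metis of_nat_diff of_nat_dvd_iff)
    qed
  qed (use assms(3,7) in simp)
qed

end
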